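(* For each $n\in\{1,2,3,\dots\}\cup\{\infty\}$ there exists a locally finite group $G^n$ with a proper left invariant metric $d_n$ such that $\operatorname{asdim}_{AN}(G^n,d_n)=n$.
   Context: A group is locally finite if every finitely generated subgroup is finite. A metric $d$ on a group is proper left invariant if $d(gh,gk)=d(h,k)$ for all $g,h,k$ and every ball is finite. $\operatorname{asdim}_{AN}(X)$ is the least $n$ for which there are constants $C>0$, $k\in\mathbb{R}$ such that for every $s>0$ there is a cover $\{\mathcal U_0,\dots,\mathcal U_n\}$ of $X$ whose members have $s$-scale connected components (classes of "joined by a finite chain inside the set with consecutive distances $<s$") of diameter at most $Cs+k$; it is $\infty$ if no such $n$ exists. *)

theory Defs
  imports "HOL-Algebra.Algebra" "HOL-Library.Extended_Nat"
begin

definition locally_finite_group :: "('a, 'b) monoid_scheme \<Rightarrow> bool" where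
  "locally_finite_group G \<longleftrightarrow> group G \<and>
     (\<forall>S. S \<subseteq> carrier G \<and> finite S \<longrightarrow> finite (generate G S))"

definition metric_on :: "'a set \<Rightarrow> ('a \<Rightarrow> 'a \<Rightarrow> real) \<Rightarrow> bool" where
  "metric_on A d \<longleftrightarrow>
     (\<forall>x\<in>A. \<forall>y\<in>A. 0 \<le> d x y \<and> (d x y = 0 \<longleftrightarrow> x = y) \<and> d x y = d y x) \<and>
     (\<forall>x\<in>A. \<forall>y\<in>A. \<forall>z\<in>A. d x z \<le> d x y + d y z)"

definition proper_left_invariant_metric ::
  "('a, 'b) monoid_scheme \<Rightarrow> ('a \<Rightarrow> 'a \<Rightarrow> real) \<Rightarrow> bool" where
  "proper_left_invariant_metric G d \<longleftrightarrow>
     metric_on (carrier G) d \<and>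
     (\<forall>g\<in>carrier G. \<forall>h\<in>carrier G. \<forall>k\<in>carrier G.
        d (g \<otimes>\<^bsub>G\<^esub> h) (g \<otimes>\<^bsub>G\<^esub> k) = d h k) \<and>
     (\<forall>x\<in>carrier G. \<forall>r::real. finite {y\<in>carrier G. d x y \<le> r})"

definition scale_connected :: "('a \<Rightarrow> 'a \<Rightarrow> real) \<Rightarrow> real \<Rightarrow> 'a set \<Rightarrow> 'a \<Rightarrow> 'a \<Rightarrow> bool" where
  "scale_connected d s U x y \<longleftrightarrow> x \<in> U \<and>
     (\<lambda>a b. a \<in> U \<and> b \<in> U \<and> d a b < s)\<^sup>*\<^sup>* x y"

definition asdim_AN_le :: "'a set \<Rightarrow> ('a \<Rightarrow> 'a \<Rightarrow> real) \<Rightarrow> nat \<Rightarrow> bool" where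
  "asdim_AN_le S d n \<longleftrightarrow>
     (\<exists>C::real. C > 0 \<and> (\<exists>k::real. \<forall>s::real. s > 0 \<longrightarrow>
        (\<exists>U :: nat \<Rightarrow> 'a set. (\<Union>i\<le>n. U i) = S \<and>
           (\<forall>i\<le>n. \<forall>x y. scale_connected d s (U i) x y \<longrightarrow> d x y \<le> C * s + k))))"

definition asdim_AN :: "'a set \<Rightarrow> ('a \<Rightarrow> 'a \<Rightarrow> real) \<Rightarrow> enat" where
  "asdim_AN S d = (if \<exists>n. asdim_AN_le S d n then enat (LEAST n. asdim_AN_le S d n) else \<infinity>)"

end

theory Submission
  imports Defs "HOL-Analysis.Brouwer_Fixpoint" "HOL-Library.Countable_Set"
begin

text \<open>
  For radices \<open>m j \<ge> 2\<close> and digit counts \<open>D j\<close> we use the group of finitely supported digit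
  arrays \<open>\<Oplus>\<^sub>j (\<int>/m\<^sub>j)^(D j)\<close> with the metric \<open>d(x,y) = max\<^sub>j\<^sub>,\<^sub>i place j \<cdot> |x j i - y j i|\<close>,
  where \<open>place j = m 0 \<cdots> m (j-1)\<close> and \<open>|\<cdot>|\<close> is the cyclic distance in \<open>\<int>/m j\<close>.

  Upper bound: with at most n digits per level and \<open>m j = (n+1)\<cdot>2^(j+1)\<close>, at a scale s
  between \<open>place j\<close> and \<open>place (j+1)\<close> chains never change digits above level j, and level j is
  handled by n+1 shifted periodic window partitions of \<open>\<int>/m j\<close>; by pigeonhole every array
  has all its level-j digits inside windows for one of the shifts, giving \<open>asdim_AN \<le> n\<close>.
  Lower bound: if levels with more than n digits have unbounded radices, an embedded grid
  \<open>{0..p}^(n+1)\<close> and the n-dimensional hex theorem (derived from Kuhn's combinatorial lemma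
  in HOL-Analysis) show that no cover by n+1 sets has linearly bounded chains.
  Taking \<open>D j = n\<close> resp. \<open>D j = j\<close> yields dimension n resp. \<open>\<infinity>\<close>; finally the countable group
  is transported to the natural numbers.
\<close>

section \<open>Scale chains and the Assouad-Nagata dimension\<close>

lemma scale_connected_invariant:
  assumes chain: "scale_connected d s U x y" and start: "P x"
    and step: "\<And>a b. a \<in> U \<Longrightarrow> b \<in> U \<Longrightarrow> d a b < s \<Longrightarrow> P a \<Longrightarrow> P b"
  shows "y \<in> U \<and> P y"
proof -
  have xU: "x \<in> U" and rel: "(\<lambda>a b. a \<in> U \<and> b \<in> U \<and> d a b < s)\<^sup>*\<^sup>* x y"
    using chain by (auto simp: scale_connected_def)
  from rel show ?thesis
    by (induction rule: rtranclp_induct) (use xU start step in auto)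
qed

lemma chain_image_scale_connected:
  assumes chain: "R\<^sup>*\<^sup>* y x" and start: "e y \<in> V"
    and steps: "\<And>a b. R a b \<Longrightarrow> e a \<in> V \<and> e b \<in> V \<and> d (e a) (e b) < s"
  shows "scale_connected d s V (e y) (e x)"
  using chain
proof (induction rule: rtranclp_induct)
  case base
  then show ?case using start by (simp add: scale_connected_def)
next
  case (step a b)
  then show ?case using steps[OF step(2)] by (auto simp: scale_connected_def intro: rtranclp.rtrancl_into_rtrancl)
qed

text \<open>The upper bound \<open>asdim_AN \<le> n\<close> is inherited along isometric embeddings: pull back the cover.\<close>
lemma asdim_AN_le_isometric_embedding:
  assumes into: "\<And>x. x \<in> XS \<Longrightarrow> h x \<in> YS"
    and iso: "\<And>x y. x \<in> XS \<Longrightarrow> y \<in> XS \<Longrightarrow> dX x y = dY (h x) (h y)"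
    and le: "asdim_AN_le YS dY n"
  shows "asdim_AN_le XS dX n"
proof -
  from le obtain C k where C: "C > 0" and cover: "\<And>s. s > 0 \<Longrightarrow> \<exists>U :: nat \<Rightarrow> _ set.
      (\<Union>i\<le>n. U i) = YS \<and> (\<forall>i\<le>n. \<forall>x y. scale_connected dY s (U i) x y \<longrightarrow> dY x y \<le> C * s + k)"
    unfolding asdim_AN_le_def by blast
  have "\<exists>V :: nat \<Rightarrow> _ set. (\<Union>i\<le>n. V i) = XS \<and>
      (\<forall>i\<le>n. \<forall>x y. scale_connected dX s (V i) x y \<longrightarrow> dX x y \<le> C * s + k)" if s: "s > 0" for s
  proof -
    from cover[OF s] obtain U where U: "(\<Union>i\<le>n. U i) = YS"
      "\<And>i x y. i \<le> n \<Longrightarrow> scale_connected dY s (U i) x y \<Longrightarrow> dY x y \<le> C * s + k" by blast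
    define V where "V i = {x\<in>XS. h x \<in> U i}" for i
    have "dX x y \<le> C * s + k" if i: "i \<le> n" and sc: "scale_connected dX s (V i) x y" for i x y
    proof -
      have x: "x \<in> V i" using sc by (simp add: scale_connected_def)
      have "y \<in> V i \<and> scale_connected dY s (U i) (h x) (h y)"
      proof (rule scale_connected_invariant[OF sc])
        show "scale_connected dY s (U i) (h x) (h x)" using x by (simp add: scale_connected_def V_def)
      next
        fix a b assume "a \<in> V i" "b \<in> V i" "dX a b < s" "scale_connected dY s (U i) (h x) (h a)"
        then show "scale_connected dY s (U i) (h x) (h b)"
          using iso by (auto simp: scale_connected_def V_def intro: rtranclp.rtrancl_into_rtrancl)
      qed
      then show ?thesis using U(2)[OF i] iso x by (auto simp: V_def)
    qed
    moreover have "(\<Union>i\<le>n. V i) = XS" using U(1) into by (auto simp: V_def)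
    ultimately show ?thesis by blast
  qed
  then show ?thesis using C unfolding asdim_AN_le_def by blast
qed

lemma asdim_AN_isometric_bijection:
  assumes "bij_betw h XS YS" and iso: "\<And>x y. x \<in> XS \<Longrightarrow> y \<in> XS \<Longrightarrow> dX x y = dY (h x) (h y)"
  shows "asdim_AN XS dX = asdim_AN YS dY"
proof -
  let ?g = "inv_into XS h"
  have g: "?g y \<in> XS" "h (?g y) = y" if "y \<in> YS" for y
    using that assms(1) by (auto simp: bij_betw_def inv_into_into f_inv_into_f)
  have "asdim_AN_le XS dX n \<longleftrightarrow> asdim_AN_le YS dY n" for n
  proof
    assume "asdim_AN_le XS dX n"
    then show "asdim_AN_le YS dY n"
      by (rule asdim_AN_le_isometric_embedding[where h = ?g, rotated 2]) (use g iso in auto)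
  next
    assume "asdim_AN_le YS dY n"
    then show "asdim_AN_le XS dX n"
      by (rule asdim_AN_le_isometric_embedding[where h = h, rotated 2])
        (use assms(1) iso in \<open>auto simp: bij_betw_def\<close>)
  qed
  then have "asdim_AN_le XS dX = asdim_AN_le YS dY" by blast
  then show ?thesis unfolding asdim_AN_def by simp
qed

lemma asdim_AN_eq_enatI:
  assumes "asdim_AN_le XS d k" and "\<And>k'. k' < k \<Longrightarrow> \<not> asdim_AN_le XS d k'"
  shows "asdim_AN XS d = enat k"
proof -
  have "(LEAST k'. asdim_AN_le XS d k') = k"
    by (rule Least_equality) (use assms not_le in blast)+
  then show ?thesis using assms(1) by (auto simp: asdim_AN_def)
qed

text \<open>An injective map out of a group is a weak morphism with trivial kernel, so the
  library's \<open>image_group\<close> construction makes it a group homomorphism onto its image.\<close>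
lemma (in group) injective_weak_group_morphism:
  assumes "inj_on f (carrier G)"
  shows "weak_group_morphism f {\<one>} G"
proof (rule weak_group_morphismsI[OF one_is_normal])
  fix a b assume "a \<in> carrier G" "b \<in> carrier G"
  then show "f a = f b \<longleftrightarrow> a \<otimes> inv b \<in> {\<one>}"
    using assms inv_equality[of a "inv b"] by (auto simp: inj_on_eq_iff)
qed

text \<open>Local finiteness passes to the image group: a finite subset of the image is the image
  of a finite subset, and generated subgroups are mapped onto generated subgroups.\<close>
lemma locally_finite_image_group:
  assumes lf: "locally_finite_group G" and inj: "inj_on f (carrier G)"
  shows "locally_finite_group (image_group f G)"
  unfolding locally_finite_group_def
proof (intro conjI allI impI)
  interpret G: group G using lf by (simp add: locally_finite_group_def)
  have hom: "group_hom G (image_group f G) f"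
    by (rule G.weak_group_morphism_group_hom[OF G.injective_weak_group_morphism[OF inj]])
  then show "group (image_group f G)" by (simp add: group_hom_def group_hom_axioms_def)
  fix S assume S: "S \<subseteq> carrier (image_group f G) \<and> finite S"
  let ?g = "inv_into (carrier G) f"
  have "S = f ` ?g ` S" using S by (force simp: image_group_carrier image_image f_inv_into_f)
  moreover have gS: "?g ` S \<subseteq> carrier G" using S by (auto simp: image_group_carrier inv_into_into)
  moreover have "finite (generate G (?g ` S))" using lf gS S unfolding locally_finite_group_def by blast
  ultimately show "finite (generate (image_group f G) S)" using group_hom.generate_img[OF hom gS] by simp
qed

lemma proper_left_invariant_metric_image_group:
  assumes grp: "group G" and pm: "proper_left_invariant_metric G d" and inj: "inj_on f (carrier G)"
  shows "proper_left_invariant_metric (image_group f G)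
           (\<lambda>x y. d (inv_into (carrier G) f x) (inv_into (carrier G) f y))"
proof -
  let ?A = "carrier G" and ?g = "inv_into (carrier G) f"
  have gf: "?g (f a) = a" if "a \<in> ?A" for a using inj that by simp
  have gA: "?g x \<in> ?A" and fg: "f (?g x) = x" if "x \<in> f ` ?A" for x
    using that by (auto simp: inv_into_into f_inv_into_f)
  have met: "metric_on ?A d"
    and li: "\<forall>a\<in>?A. \<forall>b\<in>?A. \<forall>c\<in>?A. d (a \<otimes>\<^bsub>G\<^esub> b) (a \<otimes>\<^bsub>G\<^esub> c) = d b c"
    and pr: "\<forall>x\<in>?A. \<forall>r::real. finite {y\<in>?A. d x y \<le> r}"
    using pm unfolding proper_left_invariant_metric_def by auto
  show ?thesis
    unfolding proper_left_invariant_metric_def image_group_carrier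
  proof (intro conjI ballI allI)
    show "metric_on (f ` ?A) (\<lambda>x y. d (?g x) (?g y))"
      using met gA fg unfolding metric_on_def by metis
    show "d (?g (x \<otimes>\<^bsub>image_group f G\<^esub> y)) (?g (x \<otimes>\<^bsub>image_group f G\<^esub> z)) = d (?g y) (?g z)"
      if "x \<in> f ` ?A" "y \<in> f ` ?A" "z \<in> f ` ?A" for x y z
      using that gA li monoid.m_closed[OF group.is_monoid[OF grp]] by (simp add: image_group_def gf)
    fix x r assume x: "x \<in> f ` ?A"
    have "{y \<in> f ` ?A. d (?g x) (?g y) \<le> r} = f ` {a\<in>?A. d (?g x) a \<le> r}"
      using gA gf by auto
    then show "finite {y \<in> f ` ?A. d (?g x) (?g y) \<le> r}" using pr x gA by simp
  qed
qed

lemma countable_group_nat_copy: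
  fixes G :: "('a, 'b) monoid_scheme"
  assumes lf: "locally_finite_group G" and pm: "proper_left_invariant_metric G d"
    and cnt: "countable (carrier G)"
  shows "\<exists>(G'::nat monoid) d'. locally_finite_group G' \<and> proper_left_invariant_metric G' d' \<and>
          asdim_AN (carrier G') d' = asdim_AN (carrier G) d"
proof -
  let ?f = "to_nat_on (carrier G)"
  let ?d' = "\<lambda>x y. d (inv_into (carrier G) ?f x) (inv_into (carrier G) ?f y)"
  have inj: "inj_on ?f (carrier G)" using cnt by (simp add: inj_on_to_nat_on)
  have "asdim_AN (carrier G) d = asdim_AN (carrier (image_group ?f G)) ?d'"
    by (rule asdim_AN_isometric_bijection[where h = ?f])
      (use inj in \<open>auto simp: image_group_carrier inj_on_imp_bij_betw\<close>)
  then show ?thesis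
    using locally_finite_image_group[OF lf inj] proper_left_invariant_metric_image_group[OF _ pm inj] lf
    unfolding locally_finite_group_def by metis
qed

section \<open>Cyclic distance\<close>

definition cdist :: "int \<Rightarrow> int \<Rightarrow> int \<Rightarrow> int" where
  "cdist M a b = min ((a - b) mod M) ((b - a) mod M)"

lemma cdist_le_iff:
  assumes M: "M > 0"
  shows "cdist M a b \<le> t \<longleftrightarrow> (\<exists>e. \<bar>e\<bar> \<le> t \<and> M dvd (a - b - e))"
proof
  assume c: "cdist M a b \<le> t"
  show "\<exists>e. \<bar>e\<bar> \<le> t \<and> M dvd (a - b - e)"
  proof (cases "(a - b) mod M \<le> (b - a) mod M")
    case True
    then show ?thesis using c M
      by (intro exI[of _ "(a - b) mod M"]) (auto simp: cdist_def mod_eq_dvd_iff[symmetric])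
  next
    case False
    have "M dvd (a - b - (- ((b - a) mod M)))"
      using dvd_minus_iff[THEN iffD2, OF dvd_minus_mod[of M "b - a"]] by (simp add: algebra_simps)
    then show ?thesis using c M False by (intro exI[of _ "- ((b - a) mod M)"]) (auto simp: cdist_def)
  qed
next
  assume "\<exists>e. \<bar>e\<bar> \<le> t \<and> M dvd (a - b - e)"
  then obtain e where e: "\<bar>e\<bar> \<le> t" "M dvd (a - b - e)" by blast
  show "cdist M a b \<le> t"
  proof (cases "e \<ge> 0")
    case True
    have "(a - b) mod M = e mod M" using e(2) by (simp only: mod_eq_dvd_iff)
    also have "\<dots> \<le> e" using True M by (simp add: zmod_le_nonneg_dividend)
    finally show ?thesis using e(1) by (simp add: cdist_def)
  next
    case False
    have "M dvd (b - a) - (- e)"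
      using dvd_minus_iff[THEN iffD2, OF e(2)] by (simp add: algebra_simps)
    then have "(b - a) mod M = (- e) mod M" by (simp only: mod_eq_dvd_iff)
    also have "\<dots> \<le> - e" using False M by (simp add: zmod_le_nonneg_dividend)
    finally show ?thesis using e(1) False by (simp add: cdist_def)
  qed
qed

lemma cdist_le_abs: "M > 0 \<Longrightarrow> cdist M a b \<le> \<bar>a - b\<bar>"
  using cdist_le_iff[of M a b "\<bar>a - b\<bar>"] by auto

lemma cdist_nonneg: "M > 0 \<Longrightarrow> 0 \<le> cdist M a b"
  by (simp add: cdist_def)

lemma cdist_less: "M > 0 \<Longrightarrow> cdist M a b < M"
  by (simp add: cdist_def min_less_iff_disj)

lemma cdist_sym: "cdist M a b = cdist M b a"
  by (simp add: cdist_def min.commute)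

lemma cdist_self: "cdist M a a = 0"
  by (simp add: cdist_def)

lemma cdist_triangle:
  assumes M: "M > 0"
  shows "cdist M a c \<le> cdist M a b + cdist M b c"
proof -
  obtain e1 where e1: "\<bar>e1\<bar> \<le> cdist M a b" "M dvd (a - b - e1)" using cdist_le_iff[OF M] by blast
  obtain e2 where e2: "\<bar>e2\<bar> \<le> cdist M b c" "M dvd (b - c - e2)" using cdist_le_iff[OF M] by blast
  have "M dvd (a - c - (e1 + e2))" using dvd_add[OF e1(2) e2(2)] by (simp add: algebra_simps)
  moreover have "\<bar>e1 + e2\<bar> \<le> cdist M a b + cdist M b c" using e1(1) e2(1) by linarith
  ultimately show ?thesis using cdist_le_iff[OF M] by blast
qed

lemma cdist_eq_0_iff:
  assumes M: "M > 0" and a: "0 \<le> a" "a < M" and b: "0 \<le> b" "b < M"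
  shows "cdist M a b = 0 \<longleftrightarrow> a = b"
proof
  assume "cdist M a b = 0"
  then obtain e where "\<bar>e\<bar> \<le> 0" "M dvd (a - b - e)" using cdist_le_iff[OF M, of a b 0] by auto
  then have "M dvd (a - b)" by simp
  moreover have "\<bar>a - b\<bar> < M" using a b by linarith
  ultimately show "a = b" using dvd_imp_le_int[of "a - b" M] M by force
qed (simp add: cdist_self)

lemma cdist_translate: "cdist M ((g + a) mod M) ((g + b) mod M) = cdist M a b"
proof -
  have "((g + a) mod M - (g + b) mod M) mod M = (a - b) mod M"
    "((g + b) mod M - (g + a) mod M) mod M = (b - a) mod M"
    by (simp_all add: mod_diff_eq)
  then show ?thesis unfolding cdist_def by simp
qed

lemma cdist_ge_half:
  assumes M: "M > 0" and q: "0 \<le> q" "2 * q \<le> M"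
  shows "cdist M 0 q \<ge> q"
proof (rule ccontr)
  assume "\<not> cdist M 0 q \<ge> q"
  then obtain e where e: "\<bar>e\<bar> \<le> q - 1" "M dvd (0 - q - e)" using cdist_le_iff[OF M, of 0 q "q - 1"] by auto
  then obtain r where r: "- q - e = M * r" unfolding dvd_def by auto
  have "r = 0"
  proof (rule ccontr)
    assume "r \<noteq> 0"
    then have "\<bar>M * r\<bar> \<ge> M" using M by (simp add: abs_mult mult_le_cancel_left1)
    then show False using r e q by linarith
  qed
  then show False using r e q by simp
qed

section \<open>Shifted window partitions of the integers\<close>

text \<open>For the upper bound, \<open>\<int>\<close> is cut into windows of length \<open>L = (n+1)\<cdot>2r\<close> starting at the
  points \<open>i\<cdot>2r + q\<cdot>L\<close>, for one of n+1 possible shifts \<open>i \<le> n\<close>. A value u lies in the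
  interior of a window of shift i if it keeps distance at least r from the window boundaries.\<close>
definition window_interior :: "nat \<Rightarrow> int \<Rightarrow> nat \<Rightarrow> int \<Rightarrow> bool" where
  "window_interior n r i u \<longleftrightarrow> r \<le> (u - int i * (2 * r)) mod (int (Suc n) * (2 * r)) \<and>
      (u - int i * (2 * r)) mod (int (Suc n) * (2 * r)) \<le> int (Suc n) * (2 * r) - r"

lemma near_window_boundary:
  fixes u L r :: int
  assumes L: "L > 0" and not_interior: "\<not> (r \<le> u mod L \<and> u mod L \<le> L - r)"
  shows "\<exists>q. \<bar>u - q * L\<bar> < r"
proof (cases "u mod L < r")
  case True
  then show ?thesis using L minus_div_mult_eq_mod[of u L] by (intro exI[of _ "u div L"]) simp
next
  case False
  then have "u mod L > L - r" using not_interior by simp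
  moreover have "u - (u div L + 1) * L = u mod L - L"
    using minus_div_mult_eq_mod[of u L] by (simp add: algebra_simps)
  ultimately show ?thesis
    using pos_mod_bound[OF L, of u] by (intro exI[of _ "u div L + 1"]) (simp add: abs_less_iff)
qed

text \<open>The boundaries of different shifts are \<open>2r\<close> apart, so a value is near the boundary
  for at most one shift.\<close>
lemma boundary_shift_unique:
  fixes r u :: int and i i' n :: nat
  assumes r: "r > 0" and i: "i \<le> n" "i' \<le> n"
    and bad: "\<not> window_interior n r i u" "\<not> window_interior n r i' u"
  shows "i = i'"
proof -
  define L where "L = int (Suc n) * (2 * r)"
  have L: "L > 0" using r by (simp add: L_def)
  obtain q where q: "\<bar>u - int i * (2 * r) - q * L\<bar> < r"
    using near_window_boundary[OF L, of r "u - int i * (2 * r)"] bad(1)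
    unfolding window_interior_def L_def by auto
  obtain q' where q': "\<bar>u - int i' * (2 * r) - q' * L\<bar> < r"
    using near_window_boundary[OF L, of r "u - int i' * (2 * r)"] bad(2)
    unfolding window_interior_def L_def by auto
  define z where "z = (int i' - int i) - (q - q') * int (Suc n)"
  have "(u - int i * (2 * r) - q * L) - (u - int i' * (2 * r) - q' * L) = z * (2 * r)"
    by (simp add: z_def L_def algebra_simps)
  then have "\<bar>z * (2 * r)\<bar> < 2 * r" using q q' by linarith
  then have "\<bar>z\<bar> * (2 * r) < 1 * (2 * r)" using r by (simp add: abs_mult)
  then have "z = 0" using r by (simp add: mult_less_cancel_right)
  then have d: "int i' - int i = (q - q') * int (Suc n)" by (simp add: z_def)
  show ?thesis
  proof (rule ccontr)
    assume "i \<noteq> i'"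
    then have "q \<noteq> q'" using d by auto
    then have "\<bar>q - q'\<bar> * int (Suc n) \<ge> 1 * int (Suc n)" by (intro mult_right_mono) auto
    then have "\<bar>int i' - int i\<bar> \<ge> int (Suc n)" using d by (simp add: abs_mult)
    then show False using i by linarith
  qed
qed

text \<open>Pigeonhole: for n values there is one of the n+1 shifts for which all of them lie in
  window interiors.\<close>
lemma common_interior_shift:
  assumes r: "r > 0"
  shows "\<exists>i\<le>n. \<forall>c<n. window_interior n r i (v c)"
proof -
  let ?bad = "\<lambda>c. {i\<in>{..n}. \<not> window_interior n r i (v c)}"
  have "card (?bad c) \<le> 1" for c
    using boundary_shift_unique[OF r] by (auto simp: card_le_Suc0_iff_eq)
  then have "card (\<Union>c<n. ?bad c) \<le> n"
    using card_UN_le[of "{..<n}" ?bad] sum_mono[of "{..<n}" "\<lambda>c. card (?bad c)" "\<lambda>_. 1"] by simp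
  then have "\<not> {..n} \<subseteq> (\<Union>c<n. ?bad c)"
    using card_mono[of "\<Union>c<n. ?bad c" "{..n}"] by auto
  then show ?thesis by auto
qed

text \<open>The start (reduced modulo M) of the window of length L and offset c containing v.\<close>
definition window_start :: "int \<Rightarrow> int \<Rightarrow> int \<Rightarrow> int \<Rightarrow> int" where
  "window_start M L c v = (v - (v - c) mod L) mod M"

text \<open>A step of cyclic length less than r from a window interior point stays in the window;
  this needs the window partition to be periodic modulo M, i.e. \<open>L dvd M\<close>.\<close>
lemma window_start_step:
  fixes M L c r a b :: int
  assumes M: "M > 0" and L: "L > 0" and LM: "L dvd M"
    and interior: "r \<le> (a - c) mod L \<and> (a - c) mod L \<le> L - r"
    and close: "cdist M b a < r"
  shows "window_start M L c a = window_start M L c b"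
proof -
  obtain e where e: "\<bar>e\<bar> \<le> r - 1" "M dvd (b - a - e)" using close cdist_le_iff[OF M, of b a "r - 1"] by auto
  obtain k where k: "b - a - e = M * k" using e(2) unfolding dvd_def by auto
  obtain l where l: "M = L * l" using LM unfolding dvd_def by auto
  have "(b - c) mod L = (a - c + e) mod L"
    using mod_mult_self2[of "a - c + e" L "l * k"] k l by (simp add: algebra_simps)
  also have "\<dots> = (a - c) mod L + e"
  proof -
    have "0 \<le> (a - c) mod L + e" "(a - c) mod L + e < L" using interior e(1) by linarith+
    then show ?thesis by (metis mod_add_left_eq mod_pos_pos_trivial)
  qed
  finally have "b - (b - c) mod L = (a - (a - c) mod L) + M * k" using k by (simp add: algebra_simps)
  then show ?thesis unfolding window_start_def by simp
qed

lemma window_start_eq_cdist: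
  fixes M L c a b :: int
  assumes M: "M > 0" and L: "L > 0" and same: "window_start M L c a = window_start M L c b"
  shows "cdist M a b \<le> L"
proof -
  have "M dvd ((a - (a - c) mod L) - (b - (b - c) mod L))"
    using same unfolding window_start_def by (simp add: mod_eq_dvd_iff)
  then have "M dvd (a - b - ((a - c) mod L - (b - c) mod L))" by (simp add: algebra_simps)
  moreover have "\<bar>(a - c) mod L - (b - c) mod L\<bar> \<le> L"
    using pos_mod_bound[OF L, of "a - c"] pos_mod_bound[OF L, of "b - c"]
      pos_mod_sign[OF L, of "a - c"] pos_mod_sign[OF L, of "b - c"] by linarith
  ultimately show ?thesis using cdist_le_iff[OF M] by blast
qed

lemma pow2_between:
  fixes t :: real
  assumes t: "t > 1"
  shows "\<exists>a::nat. t \<le> 2 ^ a \<and> 2 ^ a < 2 * t"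
proof -
  obtain N :: nat where N: "t < 2 ^ N" using real_arch_pow[of 2 t] by auto
  define a where "a = (LEAST a::nat. t \<le> 2 ^ a)"
  have ta: "t \<le> 2 ^ a" unfolding a_def by (rule LeastI[of _ N]) (use N in simp)
  have a0: "a \<noteq> 0" using ta t by (intro notI) simp
  have "\<not> t \<le> 2 ^ (a - 1)" unfolding a_def by (rule not_less_Least) (use a0 a_def in simp)
  moreover have "(2::real) ^ a = 2 * 2 ^ (a - 1)" using a0 by (metis power_eq_if)
  ultimately show ?thesis using ta by (intro exI[of _ a]) auto
qed

lemma int_le_two_power:
  assumes "nat M \<le> n" shows "(M::int) \<le> 2 ^ n"
proof -
  have "int n < 2 ^ n" using less_exp[of n] by (metis of_nat_less_iff of_nat_numeral of_nat_power)
  moreover have "M \<le> int n" using assms by linarith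
  ultimately show ?thesis by linarith
qed

section \<open>The hex theorem\<close>

text \<open>Points of the grid \<open>{0..p}^\<nat>\<close> (only finitely many coordinates will matter) are adjacent
  if they differ by at most one in every coordinate.\<close>
definition grid_adjacent :: "(nat \<Rightarrow> nat) \<Rightarrow> (nat \<Rightarrow> nat) \<Rightarrow> bool" where
  "grid_adjacent a b \<longleftrightarrow> (\<forall>i. a i \<le> Suc (b i) \<and> b i \<le> Suc (a i))"

definition colour_step :: "((nat \<Rightarrow> nat) \<Rightarrow> nat) \<Rightarrow> nat \<Rightarrow> nat \<Rightarrow> (nat \<Rightarrow> nat) \<Rightarrow> (nat \<Rightarrow> nat) \<Rightarrow> bool" where
  "colour_step col p j a b \<longleftrightarrow>
     (\<forall>i. a i \<le> p) \<and> (\<forall>i. b i \<le> p) \<and> col a = j \<and> col b = j \<and> grid_adjacent a b"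

text \<open>Kuhn's combinatorial lemma (the discrete Brouwer fixed point theorem in the library)
  in the form needed here: a labelling that vanishes on the faces \<open>x j = 0\<close> and is one on
  the faces \<open>x j = p\<close> admits a set of pairwise adjacent grid points containing a point with
  all labels zero and, for every j, a point with nonzero j-th label.\<close>
lemma kuhn_adjacent_labels:
  fixes lab :: "(nat \<Rightarrow> nat) \<Rightarrow> nat \<Rightarrow> nat"
  assumes p: "0 < p"
    and low: "\<And>x j. \<forall>i. x i \<le> p \<Longrightarrow> j < N \<Longrightarrow> x j = 0 \<Longrightarrow> lab x j = 0"
    and high: "\<And>x j. \<forall>i. x i \<le> p \<Longrightarrow> j < N \<Longrightarrow> x j = p \<Longrightarrow> lab x j = 1"
  shows "\<exists>s. (\<forall>a\<in>s. \<forall>i. a i \<le> p) \<and> (\<forall>a\<in>s. \<forall>b\<in>s. grid_adjacent a b) \<and>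
      (\<exists>z\<in>s. \<forall>j<N. lab z j = 0) \<and> (\<forall>j<N. \<exists>w\<in>s. lab w j \<noteq> 0)"
proof -
  have "odd (card {s. ksimplex p N s \<and> (reduced N \<circ> lab) ` s = {..N}})"
    by (rule kuhn_combinatorial[OF p]) (use low high in blast)+
  then obtain s where s: "ksimplex p N s" "(reduced N \<circ> lab) ` s = {..N}"
    by (metis (mono_tags, lifting) card.empty empty_Collect_eq odd_pos less_irrefl)
  from s(1) obtain base upd where ks: "kuhn_simplex p N base upd s" by (auto elim: ksimplex.cases)
  have "grid_adjacent a b" if "a \<in> s" "b \<in> s" for a b
    using kuhn_simplex.base_le[OF ks that(1)] kuhn_simplex.le_Suc_base[OF ks that(1)]
      kuhn_simplex.base_le[OF ks that(2)] kuhn_simplex.le_Suc_base[OF ks that(2)]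
    unfolding grid_adjacent_def by (metis le_Suc_eq le_trans Suc_le_mono)
  moreover have "\<forall>a\<in>s. \<forall>i. a i \<le> p" using kuhn_simplex.s_le_p[OF ks] by blast
  moreover have "\<exists>z\<in>s. \<forall>j<N. lab z j = 0"
  proof -
    obtain z where "z \<in> s" "reduced N (lab z) = N" using s(2) by (metis atMost_iff image_iff le_refl o_apply)
    then show ?thesis using reduced_labelling(2)[of N "lab z"] by auto
  qed
  moreover have "\<exists>w\<in>s. lab w j \<noteq> 0" if j: "j < N" for j
  proof -
    obtain w where "w \<in> s" "reduced N (lab w) = j" using s(2) j by (metis atMost_iff image_iff less_imp_le o_apply)
    then show ?thesis using reduced_labelling(3)[of N "lab w"] j by auto
  qed
  ultimately show ?thesis by blast
qed

text \<open>Otherwise labelling by reachability from the faces \<open>x j = p\<close> contradicts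
  Kuhn's lemma.\<close>
theorem hex_theorem:
  fixes col :: "(nat \<Rightarrow> nat) \<Rightarrow> nat"
  assumes p: "0 < p" and col: "\<And>x. \<forall>i. x i \<le> p \<Longrightarrow> col x < N"
  shows "\<exists>j<N. \<exists>x y. (\<forall>i. x i \<le> p) \<and> (\<forall>i. y i \<le> p) \<and> col x = j \<and> x j = 0 \<and>
           p \<le> Suc (y j) \<and> (colour_step col p j)\<^sup>*\<^sup>* y x"
proof (rule ccontr)
  assume no_crossing: "\<not> ?thesis"
  define R where "R j a b \<longleftrightarrow> grid_adjacent a b \<and> (\<forall>i. b i \<le> p) \<and> col b = j" for j a b
  define reach where "reach j x \<longleftrightarrow> (\<exists>y. (\<forall>i. y i \<le> p) \<and> y j = p \<and> (R j)\<^sup>*\<^sup>* y x)" for j x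
  have R_chain: "(colour_step col p j)\<^sup>*\<^sup>* w x \<and> col x = j \<and> (\<forall>i. x i \<le> p)"
    if "(R j)\<^sup>*\<^sup>* w x" "\<forall>i. w i \<le> p" "col w = j" for j w x
    using that by (induction rule: rtranclp_induct)
      (auto simp: R_def colour_step_def intro: rtranclp.rtrancl_into_rtrancl)
  have not_reach_bottom: "\<not> reach j x" if "j < N" "x j = 0" for j x
  proof
    assume "reach j x"
    then obtain y where y: "\<forall>i. y i \<le> p" "y j = p" "(R j)\<^sup>*\<^sup>* y x" unfolding reach_def by blast
    from y(3) show False
    proof (cases rule: converse_rtranclpE)
      case base then show False using that y p by simp
    next
      case (step w)
      then have w: "grid_adjacent y w" "\<forall>i. w i \<le> p" "col w = j" by (auto simp: R_def)
      have "p \<le> Suc (w j)" using w(1) y(2) unfolding grid_adjacent_def by metis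
      then show False using R_chain[OF step(2) w(2,3)] no_crossing that w by blast
    qed
  qed
  define lab where "lab x j = (if reach j x then 1 else 0::nat)" for x j
  have "\<exists>s. (\<forall>a\<in>s. \<forall>i. a i \<le> p) \<and> (\<forall>a\<in>s. \<forall>b\<in>s. grid_adjacent a b) \<and>
      (\<exists>z\<in>s. \<forall>j<N. lab z j = 0) \<and> (\<forall>j<N. \<exists>w\<in>s. lab w j \<noteq> 0)"
    by (rule kuhn_adjacent_labels[OF p]) (use not_reach_bottom in \<open>auto simp: lab_def reach_def\<close>)
  then obtain s z where s: "\<forall>a\<in>s. \<forall>i. a i \<le> p" "\<forall>a\<in>s. \<forall>b\<in>s. grid_adjacent a b"
    and z: "z \<in> s" "\<forall>j<N. lab z j = 0" and w: "\<forall>j<N. \<exists>w\<in>s. lab w j \<noteq> 0"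
    by blast
  define c where "c = col z"
  have c: "c < N" using col s(1) z(1) by (simp add: c_def)
  obtain v where v: "v \<in> s" "reach c v" using w c by (auto simp: lab_def split: if_splits)
  have "R c v z" using s z(1) v(1) by (simp add: R_def c_def)
  then have "reach c z" using v(2) unfolding reach_def by (blast intro: rtranclp.rtrancl_into_rtrancl)
  then show False using z(2)[rule_format, OF c] by (simp add: lab_def)
qed

section \<open>Groups of digit arrays\<close>

definition place :: "(nat \<Rightarrow> int) \<Rightarrow> nat \<Rightarrow> int" where
  "place m j = (\<Prod>i<j. m i)"

text \<open>With digitwise addition this is the group \<open>\<Oplus>\<^sub>j (\<int>/m\<^sub>j)^(D j)\<close>.\<close>
definition digit_arrays :: "(nat \<Rightarrow> nat) \<Rightarrow> (nat \<Rightarrow> int) \<Rightarrow> (nat \<Rightarrow> nat \<Rightarrow> int) set" where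
  "digit_arrays D m = {x. (\<forall>j i. 0 \<le> x j i \<and> x j i < m j) \<and> (\<forall>j i. D j \<le> i \<longrightarrow> x j i = 0) \<and>
      (\<exists>N. \<forall>j\<ge>N. \<forall>i. x j i = 0)}"

definition digit_arrays_below :: "(nat \<Rightarrow> nat) \<Rightarrow> (nat \<Rightarrow> int) \<Rightarrow> nat \<Rightarrow> (nat \<Rightarrow> nat \<Rightarrow> int) set" where
  "digit_arrays_below D m N = {x\<in>digit_arrays D m. \<forall>j\<ge>N. \<forall>i. x j i = 0}"

definition digit_group :: "(nat \<Rightarrow> nat) \<Rightarrow> (nat \<Rightarrow> int) \<Rightarrow> (nat \<Rightarrow> nat \<Rightarrow> int) monoid" where
  "digit_group D m = \<lparr>carrier = digit_arrays D m,
     monoid.mult = (\<lambda>x y j i. (x j i + y j i) mod m j), one = (\<lambda>j i. 0)\<rparr>"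

definition digit_diffs :: "(nat \<Rightarrow> int) \<Rightarrow> (nat \<Rightarrow> nat \<Rightarrow> int) \<Rightarrow> (nat \<Rightarrow> nat \<Rightarrow> int) \<Rightarrow> int set" where
  "digit_diffs m x y = {place m j * cdist (m j) (x j i) (y j i) | j i. True}"

definition digit_dist :: "(nat \<Rightarrow> int) \<Rightarrow> (nat \<Rightarrow> nat \<Rightarrow> int) \<Rightarrow> (nat \<Rightarrow> nat \<Rightarrow> int) \<Rightarrow> real" where
  "digit_dist m x y = real_of_int (Max (insert 0 (digit_diffs m x y)))"

locale digits =
  fixes D :: "nat \<Rightarrow> nat" and m :: "nat \<Rightarrow> int"
  assumes radix_ge_2: "\<And>j. m j \<ge> 2"
begin

lemma radix_pos: "m j > 0"
  using radix_ge_2[of j] by simp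

lemma place_0[simp]: "place m 0 = 1"
  by (simp add: place_def)

lemma place_Suc: "place m (Suc j) = place m j * m j"
  by (simp add: place_def)

lemma place_ge_pow2: "place m j \<ge> 2 ^ j"
proof (induction j)
  case (Suc j)
  have "(2::int) ^ Suc j = 2 ^ j * 2" by simp
  also have "\<dots> \<le> place m j * m j"
    using Suc radix_ge_2[of j] zero_le_power[of "2::int" j] by (intro mult_mono) linarith+
  finally show ?case by (simp add: place_Suc)
qed simp

lemma place_pos: "place m j \<ge> 1"
  using place_ge_pow2[of j] one_le_power[of "2::int" j] by linarith

lemma place_mono: "j \<le> j' \<Longrightarrow> place m j \<le> place m j'"
proof (induction j' rule: dec_induct)
  case (step k)
  have "place m k * 1 \<le> place m k * m k" using place_pos[of k] radix_ge_2[of k] by (intro mult_left_mono) auto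
  then show ?case using step by (simp add: place_Suc)
qed simp

lemma place_unbounded: "\<exists>N. real_of_int (place m N) > r"
proof -
  obtain N :: nat where "r < N" using reals_Archimedean2 by blast
  moreover have "real N < 2 ^ N" using less_exp[of N] by (metis of_nat_less_iff of_nat_numeral of_nat_power)
  moreover have "(2::real) ^ N \<le> real_of_int (place m N)"
    using place_ge_pow2[of N] by (metis of_int_le_iff of_int_numeral of_int_power)
  ultimately show ?thesis by (intro exI[of _ N]) linarith
qed

lemma scale_between_places:
  assumes s: "s > 1"
  shows "\<exists>j. real_of_int (place m j) < s \<and> s \<le> real_of_int (place m (Suc j))"
proof -
  obtain N where N: "real_of_int (place m N) > s" using place_unbounded by blast
  define j where "j = (LEAST j. s \<le> real_of_int (place m j))"
  have above: "s \<le> real_of_int (place m j)" unfolding j_def by (rule LeastI[of _ N]) (use N in simp)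
  have j0: "j \<noteq> 0"
  proof
    assume "j = 0"
    then show False using above s by simp
  qed
  have "\<not> s \<le> real_of_int (place m (j - 1))"
    unfolding j_def by (rule not_less_Least) (use j0 j_def in simp)
  then show ?thesis using above j0 by (intro exI[of _ "j - 1"]) simp
qed

lemma digit_arrays_below_finite: "finite (digit_arrays_below D m N)"
proof -
  let ?I = "Sigma {..<N} (\<lambda>j. {..<D j})"
  let ?F = "PiE ?I (\<lambda>(j,i). {0..<m j})"
  let ?g = "\<lambda>f j i. if j < N \<and> i < D j then f (j, i) else 0"
  have "digit_arrays_below D m N \<subseteq> ?g ` ?F"
  proof
    fix x assume x: "x \<in> digit_arrays_below D m N"
    have "x = ?g (restrict (\<lambda>(j,i). x j i) ?I)"
      using x by (auto simp: digit_arrays_below_def digit_arrays_def fun_eq_iff not_less)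
    moreover have "restrict (\<lambda>(j,i). x j i) ?I \<in> ?F"
      using x by (auto simp: digit_arrays_below_def digit_arrays_def)
    ultimately show "x \<in> ?g ` ?F" by blast
  qed
  moreover have "finite ?F" by (intro finite_PiE) auto
  ultimately show ?thesis by (meson finite_imageI finite_subset)
qed

lemma digit_arrays_countable: "countable (digit_arrays D m)"
proof -
  let ?f = "\<lambda>xs::int list list. \<lambda>j i. if j < length xs \<and> i < length (xs ! j) then xs ! j ! i else 0"
  have "digit_arrays D m \<subseteq> range ?f"
  proof
    fix x assume x: "x \<in> digit_arrays D m"
    then obtain N where N: "\<forall>j\<ge>N. \<forall>i. x j i = 0" by (auto simp: digit_arrays_def)
    have "x j i = ?f (map (\<lambda>j. map (x j) [0..<D j]) [0..<N]) j i" for j i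
      using x N by (cases "j < N"; cases "i < D j") (auto simp: digit_arrays_def)
    then show "x \<in> range ?f" by blast
  qed
  then show ?thesis by (rule countable_subset) simp
qed

lemma digit_group_simps[simp]:
  "carrier (digit_group D m) = digit_arrays D m"
  "x \<otimes>\<^bsub>digit_group D m\<^esub> y = (\<lambda>j i. (x j i + y j i) mod m j)"
  "\<one>\<^bsub>digit_group D m\<^esub> = (\<lambda>j i. 0)"
  by (simp_all add: digit_group_def)

lemma digitwise_closed:
  assumes "\<And>j i. f j i 0 0 = 0" and x: "x \<in> digit_arrays_below D m N" and y: "y \<in> digit_arrays_below D m N"
  shows "(\<lambda>j i. f j i (x j i) (y j i) mod m j) \<in> digit_arrays_below D m N"
  using assms radix_pos unfolding digit_arrays_below_def digit_arrays_def by (auto intro!: exI[of _ N])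

lemma digit_arrays_eq_Union: "digit_arrays D m = (\<Union>N. digit_arrays_below D m N)"
  by (auto simp: digit_arrays_below_def digit_arrays_def)

lemma digit_group_is_group: "group (digit_group D m)"
proof (rule groupI)
  fix x y assume x: "x \<in> carrier (digit_group D m)" and y: "y \<in> carrier (digit_group D m)"
  obtain N N' where "x \<in> digit_arrays_below D m N" "y \<in> digit_arrays_below D m N'"
    using x y digit_arrays_eq_Union by auto
  then have "x \<in> digit_arrays_below D m (max N N')" "y \<in> digit_arrays_below D m (max N N')"
    by (auto simp: digit_arrays_below_def)
  then show "x \<otimes>\<^bsub>digit_group D m\<^esub> y \<in> carrier (digit_group D m)"
    using digitwise_closed[where f = "\<lambda>_ _. (+)" and N = "max N N'"] by (simp add: digit_arrays_below_def)
  show "\<exists>y\<in>carrier (digit_group D m). y \<otimes>\<^bsub>digit_group D m\<^esub> x = \<one>\<^bsub>digit_group D m\<^esub>"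
  proof
    show "(\<lambda>j i. (- x j i) mod m j) \<otimes>\<^bsub>digit_group D m\<^esub> x = \<one>\<^bsub>digit_group D m\<^esub>"
      by (simp add: fun_eq_iff mod_add_left_eq)
    obtain N where "x \<in> digit_arrays_below D m N" using x digit_arrays_eq_Union by auto
    then show "(\<lambda>j i. (- x j i) mod m j) \<in> carrier (digit_group D m)"
      using digitwise_closed[where f = "\<lambda>_ _ a b. - a" and y = x] by (auto simp: digit_arrays_below_def)
  qed
  show "\<one>\<^bsub>digit_group D m\<^esub> \<otimes>\<^bsub>digit_group D m\<^esub> x = x"
    using x by (auto simp: fun_eq_iff digit_arrays_def)
next
  show "x \<otimes>\<^bsub>digit_group D m\<^esub> y \<otimes>\<^bsub>digit_group D m\<^esub> z = x \<otimes>\<^bsub>digit_group D m\<^esub> (y \<otimes>\<^bsub>digit_group D m\<^esub> z)" for x y z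
    by (simp add: fun_eq_iff mod_add_left_eq mod_add_right_eq add.assoc)
  show "\<one>\<^bsub>digit_group D m\<^esub> \<in> carrier (digit_group D m)"
    using radix_pos by (auto simp: digit_arrays_def)
qed

lemma subgroup_digit_arrays_below: "subgroup (digit_arrays_below D m N) (digit_group D m)"
proof -
  interpret group "digit_group D m" by (rule digit_group_is_group)
  show ?thesis
  proof (rule subgroupI)
    show "digit_arrays_below D m N \<subseteq> carrier (digit_group D m)"
      by (auto simp: digit_arrays_below_def)
    show "digit_arrays_below D m N \<noteq> {}"
      using radix_pos by (auto simp: digit_arrays_below_def digit_arrays_def)
    fix a b assume a: "a \<in> digit_arrays_below D m N" and b: "b \<in> digit_arrays_below D m N"
    have "inv\<^bsub>digit_group D m\<^esub> a = (\<lambda>j i. (- a j i) mod m j)"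
      using a digitwise_closed[where f = "\<lambda>_ _ a b. - a" and y = a]
      by (intro inv_equality) (auto simp: digit_arrays_below_def fun_eq_iff mod_add_left_eq)
    then show "inv\<^bsub>digit_group D m\<^esub> a \<in> digit_arrays_below D m N"
      using a digitwise_closed[where f = "\<lambda>_ _ a b. - a" and y = a] by simp
    show "a \<otimes>\<^bsub>digit_group D m\<^esub> b \<in> digit_arrays_below D m N"
      using a b digitwise_closed[where f = "\<lambda>_ _. (+)"] by simp
  qed
qed

text \<open>A finite set of arrays is supported below some level, so it generates a subgroup of
  the finite group \<open>digit_arrays_below D m N\<close>.\<close>
theorem digit_group_locally_finite: "locally_finite_group (digit_group D m)"
  unfolding locally_finite_group_def
proof (intro conjI allI impI digit_group_is_group)
  fix S assume S: "S \<subseteq> carrier (digit_group D m) \<and> finite S"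
  have "\<exists>N. S \<subseteq> digit_arrays_below D m N"
    using S
  proof (induction S rule: infinite_finite_induct)
    case (insert x S)
    obtain N where "S \<subseteq> digit_arrays_below D m N" using insert by auto
    moreover obtain N' where "x \<in> digit_arrays_below D m N'" using insert digit_arrays_eq_Union by auto
    ultimately have "insert x S \<subseteq> digit_arrays_below D m (max N N')"
      by (auto simp: digit_arrays_below_def)
    then show ?case by blast
  qed auto
  then obtain N where "S \<subseteq> digit_arrays_below D m N" by blast
  then have "generate (digit_group D m) S \<subseteq> digit_arrays_below D m N"
    by (rule group.generate_subgroup_incl[OF digit_group_is_group _ subgroup_digit_arrays_below])
  then show "finite (generate (digit_group D m) S)"
    using digit_arrays_below_finite finite_subset by blast
qed

lemma digit_diffs_finite:
  assumes x: "x \<in> digit_arrays D m" and y: "y \<in> digit_arrays D m"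
  shows "finite (digit_diffs m x y)"
proof -
  obtain N1 N2 where N: "\<forall>j\<ge>N1. \<forall>i. x j i = 0" "\<forall>j\<ge>N2. \<forall>i. y j i = 0"
    using x y by (auto simp: digit_arrays_def)
  let ?I = "Sigma {..<max N1 N2} (\<lambda>j. {..<D j})"
  let ?f = "\<lambda>(j, i). place m j * cdist (m j) (x j i) (y j i)"
  have "digit_diffs m x y \<subseteq> insert 0 (?f ` ?I)"
  proof
    fix v assume "v \<in> digit_diffs m x y"
    then obtain j i where v: "v = ?f (j, i)" by (auto simp: digit_diffs_def)
    show "v \<in> insert 0 (?f ` ?I)"
    proof (cases "(j, i) \<in> ?I")
      case False
      then have "x j i = 0" "y j i = 0" using N x y by (auto simp: digit_arrays_def)
      then show ?thesis using v by (simp add: cdist_self)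
    qed (use v in blast)
  qed
  then show ?thesis by (rule finite_subset) auto
qed

lemma digit_dist_ge:
  assumes "x \<in> digit_arrays D m" "y \<in> digit_arrays D m"
  shows "real_of_int (place m j * cdist (m j) (x j i) (y j i)) \<le> digit_dist m x y"
proof -
  have "place m j * cdist (m j) (x j i) (y j i) \<in> digit_diffs m x y" by (auto simp: digit_diffs_def)
  then show ?thesis
    using digit_diffs_finite[OF assms] unfolding digit_dist_def of_int_le_iff by (simp add: Max_ge_iff)
qed

lemma digit_dist_nonneg: "x \<in> digit_arrays D m \<Longrightarrow> y \<in> digit_arrays D m \<Longrightarrow> 0 \<le> digit_dist m x y"
  using digit_diffs_finite[of x y] by (simp add: digit_dist_def Max_ge_iff)

lemma digit_dist_le:
  assumes x: "x \<in> digit_arrays D m" and y: "y \<in> digit_arrays D m" and B: "0 \<le> B"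
    and bound: "\<And>j i. real_of_int (place m j * cdist (m j) (x j i) (y j i)) \<le> B"
  shows "digit_dist m x y \<le> B"
proof -
  have "Max (insert 0 (digit_diffs m x y)) \<in> insert 0 (digit_diffs m x y)"
    using digit_diffs_finite[OF x y] by (intro Max_in) auto
  then show ?thesis using B bound by (auto simp: digit_dist_def digit_diffs_def)
qed

lemma digit_dist_ge_place:
  assumes x: "x \<in> digit_arrays D m" and y: "y \<in> digit_arrays D m" and ne: "x j i \<noteq> y j i"
  shows "real_of_int (place m j) \<le> digit_dist m x y"
proof -
  have "cdist (m j) (x j i) (y j i) \<noteq> 0"
    using cdist_eq_0_iff[OF radix_pos] x y ne by (simp add: digit_arrays_def)
  then have "1 \<le> cdist (m j) (x j i) (y j i)" using cdist_nonneg[OF radix_pos[of j], of "x j i" "y j i"] by linarith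
  then have "place m j * 1 \<le> place m j * cdist (m j) (x j i) (y j i)"
    using place_pos[of j] by (intro mult_left_mono) auto
  then show ?thesis using digit_dist_ge[OF x y, of j i] by (simp only: mult_1_right of_int_le_iff)
qed

lemma digit_dist_agree_above:
  assumes x: "x \<in> digit_arrays D m" and y: "y \<in> digit_arrays D m"
    and d: "digit_dist m x y < place m (Suc j)" and j: "j < j'"
  shows "x j' i = y j' i"
proof (rule ccontr)
  assume "x j' i \<noteq> y j' i"
  then have "real_of_int (place m j') \<le> digit_dist m x y" by (rule digit_dist_ge_place[OF x y])
  moreover have "place m (Suc j) \<le> place m j'" using j by (intro place_mono) simp
  ultimately show False using d by linarith
qed

lemma level_cdist_less:
  assumes x: "x \<in> digit_arrays D m" and y: "y \<in> digit_arrays D m"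
    and d: "digit_dist m x y < real_of_int (place m j) * t"
  shows "real_of_int (cdist (m j) (x j i) (y j i)) < t"
proof -
  have "real_of_int (place m j) * cdist (m j) (x j i) (y j i) < real_of_int (place m j) * t"
    using digit_dist_ge[OF x y, of j i] d by simp
  then show ?thesis using place_pos[of j] by (simp add: mult_less_cancel_left)
qed

text \<open>Conversely, arrays agreeing above level j whose level-j digits are within cyclic
  distance K are at distance at most \<open>place m j \<cdot> K\<close>: lower levels contribute less than
  \<open>place m j\<close> by the mixed radix.\<close>
lemma digit_dist_le_level:
  assumes x: "x \<in> digit_arrays D m" and y: "y \<in> digit_arrays D m"
    and above: "\<And>j' i. j < j' \<Longrightarrow> x j' i = y j' i"
    and level: "\<And>i. cdist (m j) (x j i) (y j i) \<le> K" and K: "1 \<le> K"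
  shows "digit_dist m x y \<le> real_of_int (place m j * K)"
proof (rule digit_dist_le[OF x y])
  show "0 \<le> real_of_int (place m j * K)" using place_pos[of j] K by simp
  fix j' i
  have "place m j' * cdist (m j') (x j' i) (y j' i) \<le> place m j * K"
  proof (cases j' j rule: linorder_cases)
    case less
    have "place m j' * cdist (m j') (x j' i) (y j' i) \<le> place m j' * m j'"
      using cdist_less[OF radix_pos[of j'], of "x j' i" "y j' i"] place_pos[of j']
      by (intro mult_left_mono) auto
    moreover have "place m j' * m j' \<le> place m j"
      using place_mono[of "Suc j'" j] less by (simp add: place_Suc)
    moreover have "place m j \<le> place m j * K" using place_pos[of j] K by (simp add: mult_le_cancel_left1)
    ultimately show ?thesis by linarith
  next
    case equal
    then show ?thesis using level[of i] place_pos[of j] by (simp add: mult_left_mono)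
  next
    case greater
    then show ?thesis using above place_pos[of j] K by (simp add: cdist_self)
  qed
  then show "real_of_int (place m j' * cdist (m j') (x j' i) (y j' i)) \<le> real_of_int (place m j * K)"
    by (simp only: of_int_le_iff)
qed

lemma digit_dist_triangle:
  assumes x: "x \<in> digit_arrays D m" and y: "y \<in> digit_arrays D m" and z: "z \<in> digit_arrays D m"
  shows "digit_dist m x z \<le> digit_dist m x y + digit_dist m y z"
proof (rule digit_dist_le[OF x z])
  show "0 \<le> digit_dist m x y + digit_dist m y z" using digit_dist_nonneg x y z by (simp add: add_nonneg_nonneg)
  fix j i
  have "place m j * cdist (m j) (x j i) (z j i)
      \<le> place m j * cdist (m j) (x j i) (y j i) + place m j * cdist (m j) (y j i) (z j i)"
    using cdist_triangle[OF radix_pos] place_pos[of j] by (simp add: distrib_left[symmetric] mult_left_mono)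
  then show "real_of_int (place m j * cdist (m j) (x j i) (z j i)) \<le> digit_dist m x y + digit_dist m y z"
    using digit_dist_ge[OF x y, of j i] digit_dist_ge[OF y z, of j i] by linarith
qed

lemma digit_dist_metric: "metric_on (digit_arrays D m) (digit_dist m)"
  unfolding metric_on_def
proof (intro conjI ballI)
  fix x y assume x: "x \<in> digit_arrays D m" and y: "y \<in> digit_arrays D m"
  show "0 \<le> digit_dist m x y" using digit_dist_nonneg[OF x y] .
  show "digit_dist m x y = digit_dist m y x"
    unfolding digit_dist_def digit_diffs_def by (simp add: cdist_sym)
  show "digit_dist m x y = 0 \<longleftrightarrow> x = y"
  proof
    assume d0: "digit_dist m x y = 0"
    show "x = y"
    proof (rule ccontr)
      assume "x \<noteq> y"
      then obtain j i where "x j i \<noteq> y j i" by (meson ext)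
      then show False using digit_dist_ge_place[OF x y] place_pos[of j] d0 by force
    qed
  qed (simp add: digit_dist_def digit_diffs_def cdist_self)
qed (rule digit_dist_triangle)

text \<open>Balls are finite: points within distance r of x agree with x above the level where place
  values exceed r.\<close>
lemma digit_dist_balls_finite:
  assumes x: "x \<in> digit_arrays D m"
  shows "finite {y\<in>digit_arrays D m. digit_dist m x y \<le> r}"
proof -
  obtain N0 where N0: "\<forall>j\<ge>N0. \<forall>i. x j i = 0" using x by (auto simp: digit_arrays_def)
  obtain N1 where "real_of_int (place m N1) > r" using place_unbounded by blast
  moreover have "place m N1 \<le> place m (Suc N1)" by (rule place_mono) simp
  ultimately have N1: "real_of_int (place m (Suc N1)) > r" by (meson of_int_le_iff less_le_trans)
  have "{y\<in>digit_arrays D m. digit_dist m x y \<le> r} \<subseteq> digit_arrays_below D m (max N0 (Suc N1))"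
    using digit_dist_agree_above[OF x, of _ N1] N0 N1 by (fastforce simp: digit_arrays_below_def)
  then show ?thesis using digit_arrays_below_finite finite_subset by blast
qed

text \<open>Left invariance is the translation invariance of the cyclic distance, digit by digit.\<close>
theorem digit_dist_proper_left_invariant: "proper_left_invariant_metric (digit_group D m) (digit_dist m)"
  unfolding proper_left_invariant_metric_def
  using digit_dist_metric digit_dist_balls_finite
  by (simp add: digit_dist_def digit_diffs_def cdist_translate)

corollary digit_group_nat_copy:
  "\<exists>(G::nat monoid) d. locally_finite_group G \<and> proper_left_invariant_metric G d \<and>
     asdim_AN (carrier G) d = asdim_AN (digit_arrays D m) (digit_dist m)"
  using countable_group_nat_copy[OF digit_group_locally_finite digit_dist_proper_left_invariant]
    digit_arrays_countable by simp

end

section \<open>Lower bound\<close>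

definition grid_embedding :: "nat \<Rightarrow> nat \<Rightarrow> (nat \<Rightarrow> nat) \<Rightarrow> nat \<Rightarrow> nat \<Rightarrow> int" where
  "grid_embedding j N g = (\<lambda>j' i. if j' = j \<and> i < N then int (g i) else 0)"

context digits
begin

lemma grid_embedding_in:
  assumes "N \<le> D j" and "\<forall>i. g i \<le> p" and "int p < m j"
  shows "grid_embedding j N g \<in> digit_arrays D m"
proof -
  have "int (g i) < m j" for i using assms(2,3) by (meson of_nat_le_iff order.strict_trans1)
  then show ?thesis
    unfolding digit_arrays_def grid_embedding_def using assms(1) radix_pos by (auto intro!: exI[of _ "Suc j"])
qed

lemma grid_embedding_adjacent:
  assumes a: "grid_embedding j N a \<in> digit_arrays D m" and b: "grid_embedding j N b \<in> digit_arrays D m"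
    and adj: "grid_adjacent a b"
  shows "digit_dist m (grid_embedding j N a) (grid_embedding j N b) \<le> real_of_int (place m j)"
proof -
  have "cdist (m j) (grid_embedding j N a j i) (grid_embedding j N b j i) \<le> 1" for i
  proof -
    have "\<bar>int (a i) - int (b i)\<bar> \<le> 1" using adj unfolding grid_adjacent_def by (metis abs_le_iff
      diff_le_eq le_diff_eq of_nat_Suc of_nat_le_iff add.commute minus_diff_eq)
    then show ?thesis using cdist_le_abs[OF radix_pos[of j], of "int (a i)" "int (b i)"]
      by (auto simp: grid_embedding_def cdist_self)
  qed
  then show ?thesis
    using digit_dist_le_level[OF a b, of j 1] by (simp add: grid_embedding_def)
qed

lemma grid_embedding_opposite:
  assumes x: "grid_embedding j N x \<in> digit_arrays D m" and y: "grid_embedding j N y \<in> digit_arrays D m"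
    and c: "c < N" and x0: "x c = 0" and half: "2 * int (y c) \<le> m j"
  shows "real_of_int (place m j * int (y c)) \<le> digit_dist m (grid_embedding j N y) (grid_embedding j N x)"
proof -
  have "int (y c) \<le> cdist (m j) (grid_embedding j N y j c) (grid_embedding j N x j c)"
    using cdist_ge_half[OF radix_pos[of j], of "int (y c)"] half c x0
    by (simp add: grid_embedding_def cdist_sym)
  then have "place m j * int (y c) \<le> place m j * cdist (m j) (grid_embedding j N y j c) (grid_embedding j N x j c)"
    using place_pos[of j] by (intro mult_left_mono) auto
  then show ?thesis using digit_dist_ge[OF y x, of j c] by (meson of_int_le_iff order_trans)
qed

text \<open>The topological heart of the lower bound: for any cover of the digit arrays by n+1 sets,
  colour the grid \<open>{0..p}^(n+1)\<close> embedded at level j by the index of a set containing it. The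
  hex theorem gives a monochromatic chain of adjacent grid points between opposite faces; it
  is a chain at scale \<open>2 \<cdot> place m j\<close> inside one set of the cover.\<close>
lemma cover_has_crossing_chain:
  assumes j: "Suc n \<le> D j" "int p < m j" and p: "0 < p" and cover: "(\<Union>i\<le>n. U i) = digit_arrays D m"
  shows "\<exists>c\<le>n. \<exists>x y. (\<forall>i. x i \<le> p) \<and> (\<forall>i. y i \<le> p) \<and> x c = 0 \<and> p \<le> Suc (y c) \<and>
    scale_connected (digit_dist m) (2 * place m j) (U c) (grid_embedding j (Suc n) y) (grid_embedding j (Suc n) x)"
proof -
  let ?e = "grid_embedding j (Suc n)"
  have in_G: "?e g \<in> digit_arrays D m" if "\<forall>i. g i \<le> p" for g
    using grid_embedding_in[OF j(1) that j(2)] .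
  have "\<exists>c. (\<forall>i. g i \<le> p) \<longrightarrow> c < Suc n \<and> ?e g \<in> U c" for g
  proof (cases "\<forall>i. g i \<le> p")
    case True
    then have "?e g \<in> (\<Union>i\<le>n. U i)" using in_G cover by simp
    then show ?thesis by (auto simp: less_Suc_eq_le)
  qed auto
  then obtain col where col: "\<And>g. \<forall>i. g i \<le> p \<Longrightarrow> col g < Suc n \<and> ?e g \<in> U (col g)" by metis
  obtain c x y where c: "c < Suc n" and x: "\<forall>i. x i \<le> p" and y: "\<forall>i. y i \<le> p" and "col x = c"
    and x0: "x c = 0" and yc: "p \<le> Suc (y c)" and chain: "(colour_step col p c)\<^sup>*\<^sup>* y x"
    using hex_theorem[OF p, of col "Suc n"] col by blast
  have "scale_connected (digit_dist m) (2 * place m j) (U c) (?e y) (?e x)"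
  proof (rule chain_image_scale_connected[OF chain])
    show "?e y \<in> U c"
      using chain col[OF x] col[OF y] \<open>col x = c\<close> by (cases rule: converse_rtranclpE) (auto simp: colour_step_def)
    fix a b assume "colour_step col p c a b"
    then have ab: "\<forall>i. a i \<le> p" "\<forall>i. b i \<le> p" "col a = c" "col b = c" "grid_adjacent a b"
      by (simp_all add: colour_step_def)
    show "?e a \<in> U c \<and> ?e b \<in> U c \<and> digit_dist m (?e a) (?e b) < 2 * place m j"
      using col[OF ab(1)] col[OF ab(2)] ab(3,4) place_pos[of j]
        grid_embedding_adjacent[OF in_G[OF ab(1)] in_G[OF ab(2)] ab(5)] by auto
  qed
  then show ?thesis using c x y x0 yc by (intro exI[of _ c] conjI exI) auto
qed

text \<open>If infinitely many levels have more than n digits and the radices are unbounded on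
  them, then \<open>asdim_AN > n\<close>: at scale \<open>s = 2 \<cdot> place m j\<close> a crossing chain joins points at
  distance about \<open>p \<cdot> place m j\<close>, which beats \<open>C \<cdot> s + k\<close> once p is large.\<close>
theorem asdim_lower_bound:
  assumes big: "\<And>M. \<exists>j. Suc n \<le> D j \<and> M \<le> m j"
  shows "\<not> asdim_AN_le (digit_arrays D m) (digit_dist m) n"
proof
  assume "asdim_AN_le (digit_arrays D m) (digit_dist m) n"
  then obtain C k where C: "C > 0" and cover: "\<And>s. s > 0 \<Longrightarrow> \<exists>U :: nat \<Rightarrow> _ set.
      (\<Union>i\<le>n. U i) = digit_arrays D m \<and>
      (\<forall>i\<le>n. \<forall>x y. scale_connected (digit_dist m) s (U i) x y \<longrightarrow> digit_dist m x y \<le> C * s + k)"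
    unfolding asdim_AN_le_def by blast
  obtain p :: nat where p: "real p > 2 * C + \<bar>k\<bar> + 2" using reals_Archimedean2 by blast
  have p0: "0 < p" using p C by (cases p) auto
  obtain j where j: "Suc n \<le> D j" "int (2 * p) \<le> m j" using big[of "int (2 * p)"] by blast
  let ?e = "grid_embedding j (Suc n)"
  let ?l = "real_of_int (place m j)"
  have l1: "?l \<ge> 1" using place_pos[of j] by simp
  obtain U :: "nat \<Rightarrow> _ set" where U: "(\<Union>i\<le>n. U i) = digit_arrays D m"
      "\<And>i x y. i \<le> n \<Longrightarrow> scale_connected (digit_dist m) (2 * ?l) (U i) x y \<Longrightarrow>
         digit_dist m x y \<le> C * (2 * ?l) + k"
    using cover[of "2 * ?l"] l1 by auto
  obtain c x y where c: "c \<le> n" and x: "\<forall>i. x i \<le> p" and y: "\<forall>i. y i \<le> p" and x0: "x c = 0"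
    and yc: "p \<le> Suc (y c)" and chain: "scale_connected (digit_dist m) (2 * ?l) (U c) (?e y) (?e x)"
    using cover_has_crossing_chain[OF j(1) _ p0 U(1)] j(2) p0 by auto
  have upper: "digit_dist m (?e y) (?e x) \<le> C * (2 * ?l) + k" using U(2)[OF c chain] .
  have "real_of_int (place m j * int (y c)) \<le> digit_dist m (?e y) (?e x)"
  proof (rule grid_embedding_opposite)
    show "?e x \<in> digit_arrays D m" "?e y \<in> digit_arrays D m"
      using grid_embedding_in[OF j(1)] x y j(2) p0 by auto
    show "2 * int (y c) \<le> m j" using y[rule_format, of c] j(2) by linarith
  qed (use c x0 in auto)
  then have lower: "?l * real (y c) \<le> digit_dist m (?e y) (?e x)" by simp
  have "?l * (2 * C + \<bar>k\<bar>) < ?l * real (y c)"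
    using p yc l1 by (intro mult_strict_left_mono) auto
  moreover have "?l * (2 * C + \<bar>k\<bar>) = C * (2 * ?l) + ?l * \<bar>k\<bar>" by (simp add: algebra_simps)
  moreover have "\<bar>k\<bar> \<le> ?l * \<bar>k\<bar>" using l1 by (simp add: mult_le_cancel_right1)
  ultimately show False using upper lower abs_ge_self[of k] by linarith
qed

end

section \<open>Upper bound\<close>

context digits
begin

lemma chain_agrees_above:
  assumes chain: "scale_connected (digit_dist m) s V x y" and V: "V \<subseteq> digit_arrays D m"
    and s: "s \<le> place m (Suc j)" and j: "j < j'"
  shows "y j' i = x j' i"
proof -
  have "y \<in> V \<and> (\<forall>j'>j. \<forall>i. y j' i = x j' i)"
  proof (rule scale_connected_invariant[OF chain])
    fix a b assume ab: "a \<in> V" "b \<in> V" "digit_dist m a b < s" and a: "\<forall>j'>j. \<forall>i. a j' i = x j' i"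
    have "digit_dist m a b < place m (Suc j)" using ab(3) s by linarith
    then have "a j' i = b j' i" if "j < j'" for j' i
      using digit_dist_agree_above[OF _ _ _ that] ab(1,2) V by blast
    then show "\<forall>j'>j. \<forall>i. b j' i = x j' i" using a by simp
  qed simp
  then show ?thesis using j by simp
qed

text \<open>Distinct arrays are at distance at least one, so chains at scales \<open>s \<le> 1\<close> are constant.\<close>
lemma small_scale_chain_trivial:
  assumes "scale_connected (digit_dist m) s V x y" "V \<subseteq> digit_arrays D m" "s \<le> 1"
  shows "y = x"
proof -
  have "y \<in> V \<and> y = x"
  proof (rule scale_connected_invariant[OF assms(1)])
    fix a b assume ab: "a \<in> V" "b \<in> V" "digit_dist m a b < s" and "a = x"
    show "b = x"
    proof (rule ccontr)
      assume "b \<noteq> x"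
      then have "a \<noteq> b" using \<open>a = x\<close> by simp
      then obtain j i where "a j i \<noteq> b j i" by (meson ext)
      then have "real_of_int (place m j) \<le> digit_dist m a b"
        using ab(1,2) assms(2) by (intro digit_dist_ge_place) auto
      then show False using place_pos[of j] ab(3) assms(3) by linarith
    qed
  qed simp
  then show ?thesis by simp
qed

lemma coarse_chain_bound:
  assumes chain: "scale_connected (digit_dist m) s (digit_arrays D m) x y" and s: "s \<le> place m (Suc j)"
  shows "digit_dist m x y \<le> real_of_int (place m (Suc j))"
proof -
  have x: "x \<in> digit_arrays D m" and y: "y \<in> digit_arrays D m"
    using scale_connected_invariant[OF chain, of "\<lambda>_. True"] chain by (auto simp: scale_connected_def)
  have "digit_dist m x y \<le> real_of_int (place m j * m j)"
  proof (rule digit_dist_le_level[OF x y])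
    show "x j' i = y j' i" if "j < j'" for j' i using chain_agrees_above[OF chain _ s that] by simp
    show "cdist (m j) (x j i) (y j i) \<le> m j" for i using cdist_less[OF radix_pos[of j]] by (simp add: less_imp_le)
  qed (use radix_ge_2[of j] in simp)
  then show ?thesis by (simp add: place_Suc)
qed

text \<open>A step at scale \<open>s \<le> place m j \<cdot> r\<close> moves level-j
  digits by less than r, hence keeps them in their windows; so an s-chain inside V changes
  level-j digits by at most the window length and, by \<open>s \<le> place m (j+1)\<close>, no digit above j.\<close>
lemma window_chain_diameter:
  fixes s :: real
  assumes Dj: "D j \<le> n" and r: "r > 0" and L_dvd: "int (Suc n) * (2 * r) dvd m j"
    and s: "s \<le> place m (Suc j)" "s \<le> real_of_int (place m j * r)"
    and V: "V \<subseteq> digit_arrays D m" and interior: "\<And>a c. a \<in> V \<Longrightarrow> c < n \<Longrightarrow> window_interior n r i (a j c)"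
    and chain: "scale_connected (digit_dist m) s V x y"
  shows "digit_dist m x y \<le> real_of_int (place m j * (int (Suc n) * (2 * r)))"
proof -
  define L where "L = int (Suc n) * (2 * r)"
  have L: "L > 0" using r by (simp add: L_def)
  have x: "x \<in> V" using chain by (simp add: scale_connected_def)
  let ?w = "window_start (m j) L (int i * (2 * r))"
  have y: "y \<in> V \<and> (\<forall>c<n. ?w (y j c) = ?w (x j c))"
  proof (rule scale_connected_invariant[OF chain])
    fix a b assume ab: "a \<in> V" "b \<in> V" "digit_dist m a b < s" and "\<forall>c<n. ?w (a j c) = ?w (x j c)"
    moreover have "?w (a j c) = ?w (b j c)" if c: "c < n" for c
    proof (rule window_start_step[OF radix_pos L L_dvd[folded L_def]])
      show "r \<le> (a j c - int i * (2 * r)) mod L \<and> (a j c - int i * (2 * r)) mod L \<le> L - r"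
        using interior[OF ab(1) c] by (simp add: window_interior_def L_def)
      have "real_of_int (cdist (m j) (a j c) (b j c)) < real_of_int r"
        using level_cdist_less[of a b j "real_of_int r" c] ab s(2) V by auto
      then show "cdist (m j) (b j c) (a j c) < r" by (simp add: cdist_sym)
    qed
    ultimately show "\<forall>c<n. ?w (b j c) = ?w (x j c)" by simp
  qed simp
  show ?thesis unfolding L_def[symmetric]
  proof (rule digit_dist_le_level)
    show xG: "x \<in> digit_arrays D m" and yG: "y \<in> digit_arrays D m" using x y V by auto
    show "x j' c = y j' c" if "j < j'" for j' c using chain_agrees_above[OF chain V s(1) that] by simp
    show "cdist (m j) (x j c) (y j c) \<le> L" for c
    proof (cases "c < n")
      case True
      then show ?thesis using window_start_eq_cdist[OF radix_pos L, of j "int i * (2 * r)"] y by simp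
    next
      case False
      then have "x j c = 0" "y j c = 0" using xG yG Dj by (auto simp: digit_arrays_def)
      then show ?thesis using L by (simp add: cdist_self)
    qed
  qed (use L in simp)
qed

text \<open>Colouring each array by a shift for which all its level-j digits are interior (which
  exists by pigeonhole) gives a cover by n+1 sets with uniformly bounded s-chains.\<close>
lemma window_cover:
  fixes s :: real
  assumes Dj: "D j \<le> n" and r: "r > 0" and L_dvd: "int (Suc n) * (2 * r) dvd m j"
    and s: "s \<le> place m (Suc j)" "s \<le> real_of_int (place m j * r)"
  shows "\<exists>U :: nat \<Rightarrow> _ set. (\<Union>i\<le>n. U i) = digit_arrays D m \<and>
     (\<forall>i\<le>n. \<forall>x y. scale_connected (digit_dist m) s (U i) x y \<longrightarrow>
        digit_dist m x y \<le> real_of_int (place m j * (int (Suc n) * (2 * r))))"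
proof -
  have "\<forall>x. \<exists>i. i \<le> n \<and> (\<forall>c<n. window_interior n r i (x j c))"
    using common_interior_shift[OF r] by blast
  then obtain colour where colour: "\<And>x. colour x \<le> n \<and> (\<forall>c<n. window_interior n r (colour x) (x j c))"
    by metis
  define U where "U i = {x\<in>digit_arrays D m. colour x = i}" for i
  have "(\<Union>i\<le>n. U i) = digit_arrays D m" using colour by (auto simp: U_def)
  moreover have "digit_dist m x y \<le> real_of_int (place m j * (int (Suc n) * (2 * r)))"
    if "scale_connected (digit_dist m) s (U i) x y" for i x y
    by (rule window_chain_diameter[where i = i, OF Dj r L_dvd s _ _ that]) (use colour in \<open>auto simp: U_def\<close>)
  ultimately show ?thesis by blast
qed

text \<open>For the radices \<open>m j = (n+1)\<cdot>2^(j+1)\<close> and at most n digits per level, every scale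
  \<open>s > 1\<close> admits a cover by n+1 sets whose s-chains have diameter at most \<open>4(n+1)\<cdot>s\<close>: choose
  j with \<open>place m j < s \<le> place m (j+1)\<close> and a power of two \<open>r \<approx> s / place m j\<close>; if the
  windows of length \<open>(n+1)\<cdot>2r\<close> fit periodically into \<open>\<int>/m j\<close> use them, otherwise \<open>m j\<close> is
  itself so small that one set suffices.\<close>
lemma large_scale_cover:
  assumes Dn: "\<And>j. D j \<le> n" and radix: "\<And>j. m j = int (Suc n) * 2 ^ Suc j" and s: "s > 1"
  shows "\<exists>U :: nat \<Rightarrow> _ set. (\<Union>i\<le>n. U i) = digit_arrays D m \<and>
     (\<forall>i\<le>n. \<forall>x y. scale_connected (digit_dist m) s (U i) x y \<longrightarrow> digit_dist m x y \<le> 4 * real (Suc n) * s)"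
proof -
  obtain j where j: "real_of_int (place m j) < s" "s \<le> real_of_int (place m (Suc j))"
    using scale_between_places[OF s] by blast
  define l where "l = real_of_int (place m j)"
  have l1: "l \<ge> 1" using place_pos[of j] by (simp add: l_def)
  obtain a where a: "s / l \<le> 2 ^ a" "2 ^ a < 2 * (s / l)"
    using pow2_between[of "s / l"] j(1) l1 by (auto simp: l_def)
  have a': "s \<le> l * 2 ^ a" "l * 2 ^ a < 2 * s" using a l1 by (auto simp: field_simps)
  show ?thesis
  proof (cases "a \<le> j")
    case True
    have "int (Suc n) * (2 * 2 ^ a) dvd m j"
      using le_imp_power_dvd[of "Suc a" "Suc j" "2::int"] True by (simp add: radix)
    moreover have "s \<le> real_of_int (place m j * 2 ^ a)" using a' by (simp add: l_def)
    ultimately obtain U :: "nat \<Rightarrow> _ set" where U: "(\<Union>i\<le>n. U i) = digit_arrays D m"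
      "\<forall>i\<le>n. \<forall>x y. scale_connected (digit_dist m) s (U i) x y \<longrightarrow>
         digit_dist m x y \<le> real_of_int (place m j * (int (Suc n) * (2 * 2 ^ a)))"
      using window_cover[OF Dn _ _ j(2), of "2 ^ a"] by auto
    have "real_of_int (place m j * (int (Suc n) * (2 * 2 ^ a))) = 2 * real (Suc n) * (l * 2 ^ a)"
      by (simp add: l_def algebra_simps)
    also have "\<dots> \<le> 2 * real (Suc n) * (2 * s)"
      using a'(2) by (intro mult_left_mono) auto
    also have "\<dots> = 4 * real (Suc n) * s" by simp
    finally have bound: "real_of_int (place m j * (int (Suc n) * (2 * 2 ^ a))) \<le> 4 * real (Suc n) * s" .
    show ?thesis
    proof (intro exI[of _ U] conjI allI impI)
      fix i x y assume "i \<le> n" "scale_connected (digit_dist m) s (U i) x y"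
      then show "digit_dist m x y \<le> 4 * real (Suc n) * s" using U(2) order_trans[OF _ bound] by blast
    qed (rule U(1))
  next
    case False
    have "real_of_int (place m (Suc j)) = real (Suc n) * l * 2 ^ Suc j"
      by (simp add: place_Suc radix l_def)
    also have "\<dots> \<le> real (Suc n) * l * 2 ^ a"
      using False l1 by (intro mult_left_mono power_increasing) auto
    also have "\<dots> \<le> real (Suc n) * (4 * s)"
      using a'(2) s by (simp only: mult.assoc, intro mult_left_mono) auto
    also have "\<dots> = 4 * real (Suc n) * s" by simp
    finally have bound: "real_of_int (place m (Suc j)) \<le> 4 * real (Suc n) * s" .
    show ?thesis
      using order_trans[OF coarse_chain_bound[OF _ j(2)] bound] by (intro exI[of _ "\<lambda>_. digit_arrays D m"]) auto
  qed
qed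

text \<open>Hence \<open>asdim_AN \<le> n\<close> with \<open>C = 4(n+1)\<close> and \<open>k = 0\<close>; at scales \<open>s \<le> 1\<close> chains are constant.\<close>
theorem asdim_upper_bound:
  assumes Dn: "\<And>j. D j \<le> n" and radix: "\<And>j. m j = int (Suc n) * 2 ^ Suc j"
  shows "asdim_AN_le (digit_arrays D m) (digit_dist m) n"
proof -
  have "\<exists>U :: nat \<Rightarrow> _ set. (\<Union>i\<le>n. U i) = digit_arrays D m \<and>
     (\<forall>i\<le>n. \<forall>x y. scale_connected (digit_dist m) s (U i) x y \<longrightarrow> digit_dist m x y \<le> 4 * real (Suc n) * s + 0)"
    if s: "s > 0" for s
  proof (cases "s \<le> 1")
    case True
    have "digit_dist m x y \<le> 4 * real (Suc n) * s"
      if "scale_connected (digit_dist m) s (digit_arrays D m) x y" for x y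
      using small_scale_chain_trivial[OF that _ True] s by (simp add: digit_dist_def digit_diffs_def cdist_self)
    then show ?thesis by (intro exI[of _ "\<lambda>_. digit_arrays D m"]) auto
  qed (use large_scale_cover[OF Dn radix] in auto)
  then show ?thesis unfolding asdim_AN_le_def by (intro exI[of _ "4 * real (Suc n)"] conjI exI[of _ 0]) auto
qed

end

section \<open>The examples\<close>

theorem digit_group_asdim_finite:
  "\<exists>(G :: nat monoid) d. locally_finite_group G \<and> proper_left_invariant_metric G d \<and>
     asdim_AN (carrier G) d = enat n"
proof -
  define m where "m j = int (Suc n) * 2 ^ Suc j" for j
  have pow_le: "(2::int) ^ Suc j \<le> m j" for j
    using mult_right_mono[of 1 "int (Suc n)" "(2::int) ^ Suc j"] by (simp add: m_def)
  interpret digits "\<lambda>_. n" m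
    by unfold_locales (rule order_trans[OF _ pow_le], simp)
  have "asdim_AN (digit_arrays (\<lambda>_. n) m) (digit_dist m) = enat n"
  proof (rule asdim_AN_eq_enatI[OF asdim_upper_bound])
    fix k assume "k < n"
    have "\<exists>j. Suc k \<le> n \<and> M \<le> m j" for M
      using \<open>k < n\<close> int_le_two_power[of M "Suc (nat M)"] pow_le[of "nat M"]
      by (intro exI[of _ "nat M"]) simp
    then show "\<not> asdim_AN_le (digit_arrays (\<lambda>_. n) m) (digit_dist m) k" by (rule asdim_lower_bound)
  qed (simp_all add: m_def)
  then show ?thesis using digit_group_nat_copy by simp
qed

theorem digit_group_asdim_infinite:
  "\<exists>(G :: nat monoid) d. locally_finite_group G \<and> proper_left_invariant_metric G d \<and>
     asdim_AN (carrier G) d = \<infinity>"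
proof -
  define m where "m j = (2::int) ^ Suc j" for j
  interpret digits "\<lambda>j. j" m
    by unfold_locales (simp add: m_def)
  have "\<not> asdim_AN_le (digit_arrays (\<lambda>j. j) m) (digit_dist m) k" for k
  proof (rule asdim_lower_bound)
    fix M
    show "\<exists>j. Suc k \<le> j \<and> M \<le> m j"
      using int_le_two_power[of M "Suc (max (Suc k) (nat M))"]
      by (intro exI[of _ "max (Suc k) (nat M)"]) (simp add: m_def)
  qed
  then have "asdim_AN (digit_arrays (\<lambda>j. j) m) (digit_dist m) = \<infinity>" by (simp add: asdim_AN_def)
  then show ?thesis using digit_group_nat_copy by simp
qed

theorem theorem4p10:
  fixes n :: enat
  assumes "n \<ge> 1"
  shows "\<exists>(G :: nat monoid) (d :: nat \<Rightarrow> nat \<Rightarrow> real).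
           locally_finite_group G \<and> proper_left_invariant_metric G d \<and>
           asdim_AN (carrier G) d = n"
proof (cases n)
  case (enat k)
  then show ?thesis using digit_group_asdim_finite by simp
next
  case infinity
  then show ?thesis using digit_group_asdim_infinite by simp
qed

end
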